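(* Let $(E,\rho,[\cdot,\cdot],H)$ be an H-twisted Lie algebroid over a smooth manifold $M$. Set $V_1:=\Gamma(\ker\rho)$, $V_0:=\Gamma(E)$, let $\partial:V_1\hookrightarrow V_0$ be the inclusion, $l_2(\phi,\psi):=[\phi,\psi]$ for $\phi,\psi\in V_0$, $\phi\triangleright\psi:=\nabla^E_\phi\psi=[\phi,\psi]$ for $\phi\in V_0,\psi\in V_1$, and $l_3(\psi_0,\psi_1,\psi_2):=H(\psi_0,\psi_1,\psi_2)$. Then $(V_1\xrightarrow{\partial}V_0,l_2,\triangleright,l_3)$ is a two-term $L_\infty$-algebra.
   Context: An H-twisted Lie algebroid $(E,\rho,[\cdot,\cdot],H)$ over $M$ consists of a smooth vector bundle $E\to M$, a bundle map $\rho:E\to TM$, a skew-symmetric $\mathbb{R}$-bilinear bracket on $\Gamma(E)$, and $H\in\Gamma(\wedge^3E^*\otimes E)$ with $\rho\circ H=0$, such that for all $\phi,\psi,\psi_1,\psi_2\in\Gamma(E)$, $f\in C^\infty(M)$: (1) $[\phi,[\psi_1,\psi_2]]=[[\phi,\psi_1],\psi_2]+[\psi_1,[\phi,\psi_2]]+H(\phi,\psi_1,\psi_2)$; (2) $[\phi,f\psi]=\rho(\phi)[f]\psi+f[\phi,\psi]$; (3) $(DH)(\psi_0,\dots,\psi_3):=\sum_{i=0}^3(-1)^i[\psi_i,H(\psi_0,\dots,\widehat{\psi_i},\dots,\psi_3)]+\sum_{i<j}(-1)^{i+j}H([\psi_i,\psi_j],\psi_0,\dots,\widehat{\psi_i},\dots,\widehat{\psi_j},\dots,\psi_3)=0$.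 Here $\Gamma(\ker\rho)$ is the set of $\psi\in\Gamma(E)$ with $\rho(\psi)=0$; for such $\psi$ and $\phi\in\Gamma(E)$ one sets $\nabla^E_\phi\psi:=[\phi,\psi]$. A two-term $L_\infty$-algebra is a two-term complex of vector spaces $0\to V_1\xrightarrow{\partial}V_0\to0$ together with maps $[\cdot,\cdot]=l_2:V_0\wedge V_0\to V_0$, $\triangleright:V_0\otimes V_1\to V_1$, $l_3:V_0\wedge V_0\wedge V_0\to V_1$ such that for all $\phi_i\in V_0$, $f,g\in V_1$: (a) $[\phi,\partial f]=\partial(\phi\triangleright f)$; (b) $(\partial f)\triangleright g+(\partial g)\triangleright f=0$; (c) $[\phi_1,[\phi_2,\phi_3]]+[\phi_2,[\phi_3,\phi_1]]+[\phi_3,[\phi_1,\phi_2]]=\partial l_3(\phi_1,\phi_2,\phi_3)$; (d) $\phi_1\triangleright(\phi_2\triangleright f)-\phi_2\triangleright(\phi_1\triangleright f)-[\phi_1,\phi_2]\triangleright f=l_3(\phi_1,\phi_2,\partial f)$; (e) for all $\phi_0,\dots,\phi_3\in V_0$: $\sum_{i=0}^3(-1)^i\phi_i\triangleright l_3(\phi_0,\dots,\widehat{\phi_i},\dots,\phi_3)+\sum_{i<j}(-1)^{i+j}l_3([\phi_i,\phi_j],\phi_0,\dots,\widehat{\phi_i},\dots,\widehat{\phi_j},\dots,\phi_3)=0$. *)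

theory Defs
  imports Complex_Main
begin

text \<open>Algebraic model of the smooth data.
  'f plays the role of C^infinity(M) (a commutative real algebra),
  'e plays the role of Gamma(E) (a real vector space which is a C^infinity(M)-module
  via sm), and vector fields on M are modelled as derivations of C^infinity(M).\<close>

definition is_derivation :: "('f::{comm_ring_1,real_algebra_1} \<Rightarrow> 'f) \<Rightarrow> bool" where
  "is_derivation X \<longleftrightarrow>
     (\<forall>f g. X (f + g) = X f + X g) \<and> (\<forall>c f. X (c *\<^sub>R f) = c *\<^sub>R X f) \<and>
     (\<forall>f g. X (f * g) = f * X g + g * X f)"

definition fmodule :: "('f::{comm_ring_1,real_algebra_1} \<Rightarrow> 'e::real_vector \<Rightarrow> 'e) \<Rightarrow> bool" where
  "fmodule sm \<longleftrightarrow>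
     (\<forall>e. sm 1 e = e) \<and> (\<forall>f g e. sm (f * g) e = sm f (sm g e)) \<and>
     (\<forall>f g e. sm (f + g) e = sm f e + sm g e) \<and> (\<forall>f e e'. sm f (e + e') = sm f e + sm f e') \<and>
     (\<forall>c e. sm (of_real c) e = c *\<^sub>R e)"

text \<open>Anchor: a C^infinity-linear bundle map E -> TM, i.e. a C^infinity-linear map from
  sections to vector fields (derivations).\<close>
definition anchor_map :: "('f::{comm_ring_1,real_algebra_1} \<Rightarrow> 'e::real_vector \<Rightarrow> 'e)
     \<Rightarrow> ('e \<Rightarrow> 'f \<Rightarrow> 'f) \<Rightarrow> bool" where
  "anchor_map sm \<rho> \<longleftrightarrow> (\<forall>e. is_derivation (\<rho> e)) \<and>
     (\<forall>e e' g. \<rho> (e + e') g = \<rho> e g + \<rho> e' g) \<and> (\<forall>f e g. \<rho> (sm f e) g = f * \<rho> e g)"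

text \<open>H in Gamma(wedge^3 E^* tensor E): C^infinity-trilinear and alternating.\<close>
definition tensor3_alt :: "('f::{comm_ring_1,real_algebra_1} \<Rightarrow> 'e::real_vector \<Rightarrow> 'e)
     \<Rightarrow> ('e \<Rightarrow> 'e \<Rightarrow> 'e \<Rightarrow> 'e) \<Rightarrow> bool" where
  "tensor3_alt sm H \<longleftrightarrow>
     (\<forall>a b c. H a b c = - H b a c) \<and> (\<forall>a b c. H a b c = - H a c b) \<and>
     (\<forall>a b c d. H a b (c + d) = H a b c + H a b d) \<and>
     (\<forall>f a b c. H a b (sm f c) = sm f (H a b c))"

definition DH_zero :: "('e::real_vector \<Rightarrow> 'e \<Rightarrow> 'e) \<Rightarrow> ('e \<Rightarrow> 'e \<Rightarrow> 'e \<Rightarrow> 'e) \<Rightarrow> bool" where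
  "DH_zero br H \<longleftrightarrow> (\<forall>p0 p1 p2 p3.
      br p0 (H p1 p2 p3) - br p1 (H p0 p2 p3) + br p2 (H p0 p1 p3) - br p3 (H p0 p1 p2)
      - H (br p0 p1) p2 p3 + H (br p0 p2) p1 p3 - H (br p0 p3) p1 p2
      - H (br p1 p2) p0 p3 + H (br p1 p3) p0 p2 - H (br p2 p3) p0 p1 = 0)"

definition H_twisted_Lie_algebroid ::
  "('f::{comm_ring_1,real_algebra_1} \<Rightarrow> 'e::real_vector \<Rightarrow> 'e) \<Rightarrow> ('e \<Rightarrow> 'f \<Rightarrow> 'f)
   \<Rightarrow> ('e \<Rightarrow> 'e \<Rightarrow> 'e) \<Rightarrow> ('e \<Rightarrow> 'e \<Rightarrow> 'e \<Rightarrow> 'e) \<Rightarrow> bool" where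
  "H_twisted_Lie_algebroid sm \<rho> br H \<longleftrightarrow>
     fmodule sm \<and> anchor_map sm \<rho> \<and> tensor3_alt sm H \<and>
     (\<forall>a b. br a b = - br b a) \<and>
     (\<forall>a b c. br a (b + c) = br a b + br a c) \<and> (\<forall>a b r. br a (r *\<^sub>R b) = r *\<^sub>R br a b) \<and>
     (\<forall>a b g. \<rho> (H a b (g::'e)) = (\<lambda>_. 0)) \<and>
     (\<forall>p q1 q2. br p (br q1 q2) = br (br p q1) q2 + br q1 (br p q2) + H p q1 q2) \<and>
     (\<forall>p f q. br p (sm f q) = sm (\<rho> p f) q + sm f (br p q)) \<and>
     DH_zero br H"

definition lin_on :: "'a::real_vector set \<Rightarrow> ('a \<Rightarrow> 'b::real_vector) \<Rightarrow> bool" where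
  "lin_on A f \<longleftrightarrow> (\<forall>x\<in>A. \<forall>y\<in>A. f (x + y) = f x + f y) \<and> (\<forall>x\<in>A. \<forall>c. f (c *\<^sub>R x) = c *\<^sub>R f x)"

definition real_subspace :: "'a::real_vector set \<Rightarrow> bool" where
  "real_subspace A \<longleftrightarrow> 0 \<in> A \<and> (\<forall>x\<in>A. \<forall>y\<in>A. x + y \<in> A) \<and> (\<forall>x\<in>A. \<forall>c. c *\<^sub>R x \<in> A)"

definition two_term_Linfty ::
  "'a::real_vector set \<Rightarrow> 'b::real_vector set \<Rightarrow> ('a \<Rightarrow> 'b) \<Rightarrow> ('b \<Rightarrow> 'b \<Rightarrow> 'b)
   \<Rightarrow> ('b \<Rightarrow> 'a \<Rightarrow> 'a) \<Rightarrow> ('b \<Rightarrow> 'b \<Rightarrow> 'b \<Rightarrow> 'a) \<Rightarrow> bool" where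
  "two_term_Linfty V1 V0 d l2 tr l3 \<longleftrightarrow>
     real_subspace V1 \<and> real_subspace V0 \<and>
     (\<forall>f\<in>V1. d f \<in> V0) \<and> lin_on V1 d \<and>
     (\<forall>x\<in>V0. \<forall>y\<in>V0. l2 x y \<in> V0) \<and>
     (\<forall>x\<in>V0. lin_on V0 (l2 x)) \<and> (\<forall>x\<in>V0. \<forall>y\<in>V0. l2 x y = - l2 y x) \<and>
     (\<forall>x\<in>V0. \<forall>f\<in>V1. tr x f \<in> V1) \<and>
     (\<forall>x\<in>V0. lin_on V1 (tr x)) \<and> (\<forall>f\<in>V1. lin_on V0 (\<lambda>x. tr x f)) \<and>
     (\<forall>x\<in>V0. \<forall>y\<in>V0. \<forall>z\<in>V0. l3 x y z \<in> V1) \<and>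
     (\<forall>x\<in>V0. \<forall>y\<in>V0. lin_on V0 (l3 x y)) \<and>
     (\<forall>x\<in>V0. \<forall>y\<in>V0. \<forall>z\<in>V0. l3 x y z = - l3 y x z \<and> l3 x y z = - l3 x z y) \<and>
     \<comment> \<open>(a)\<close>
     (\<forall>x\<in>V0. \<forall>f\<in>V1. l2 x (d f) = d (tr x f)) \<and>
     \<comment> \<open>(b)\<close>
     (\<forall>f\<in>V1. \<forall>g\<in>V1. tr (d f) g + tr (d g) f = 0) \<and>
     \<comment> \<open>(c)\<close>
     (\<forall>x\<in>V0. \<forall>y\<in>V0. \<forall>z\<in>V0.
        l2 x (l2 y z) + l2 y (l2 z x) + l2 z (l2 x y) = d (l3 x y z)) \<and>
     \<comment> \<open>(d)\<close>
     (\<forall>x\<in>V0. \<forall>y\<in>V0. \<forall>f\<in>V1.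
        tr x (tr y f) - tr y (tr x f) - tr (l2 x y) f = l3 x y (d f)) \<and>
     \<comment> \<open>(e)\<close>
     (\<forall>p0\<in>V0. \<forall>p1\<in>V0. \<forall>p2\<in>V0. \<forall>p3\<in>V0.
        tr p0 (l3 p1 p2 p3) - tr p1 (l3 p0 p2 p3) + tr p2 (l3 p0 p1 p3) - tr p3 (l3 p0 p1 p2)
        - l3 (l2 p0 p1) p2 p3 + l3 (l2 p0 p2) p1 p3 - l3 (l2 p0 p3) p1 p2
        - l3 (l2 p1 p2) p0 p3 + l3 (l2 p1 p3) p0 p2 - l3 (l2 p2 p3) p0 p1 = 0)"

end

theory Submission
  imports Defs
begin

text \<open>Everything except closure of \<open>\<Gamma>(ker \<rho>)\<close> under the bracket is a direct reading of the
  axioms: the Jacobiator is \<open>H\<close>, the action is the restricted bracket, and condition (e) is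
  \<open>DH = 0\<close>. For the closure, expanding the twisted Jacobi identity on \<open>[p, [q, f r]]\<close> with the
  Leibniz rule and cancelling the Jacobi identity for \<open>p, q, r\<close> (which \<open>H\<close> survives, being
  \<open>C\<^sup>\<infinity>\<close>-linear) shows that \<open>\<rho>\<close> maps the bracket to the commutator of vector fields, up to
  the module action. Hence \<open>\<rho> q = 0\<close> forces \<open>f \<mapsto> \<rho>[p, q] f\<close> to act trivially, and the
  nondegeneracy hypothesis gives \<open>\<rho>[p, q] = 0\<close>.\<close>

locale twisted_Lie_algebroid =
  fixes sm :: "'f::{comm_ring_1,real_algebra_1} \<Rightarrow> 'e::real_vector \<Rightarrow> 'e"
    and \<rho> :: "'e \<Rightarrow> 'f \<Rightarrow> 'f"
    and br :: "'e \<Rightarrow> 'e \<Rightarrow> 'e"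
    and H :: "'e \<Rightarrow> 'e \<Rightarrow> 'e \<Rightarrow> 'e"
  assumes algebroid: "H_twisted_Lie_algebroid sm \<rho> br H"
begin

lemma module_structure: "fmodule sm"
  and anchor_structure: "anchor_map sm \<rho>"
  and H_tensor: "tensor3_alt sm H"
  and bracket_skew: "br a b = - br b a"
  and bracket_add_right: "br a (b + c) = br a b + br a c"
  and bracket_scaleR_right: "br a (r *\<^sub>R b) = r *\<^sub>R br a b"
  and anchor_H: "\<rho> (H a b c) = (\<lambda>_. 0)"
  and twisted_Jacobi: "br p (br q1 q2) = br (br p q1) q2 + br q1 (br p q2) + H p q1 q2"
  and bracket_Leibniz: "br p (sm f q) = sm (\<rho> p f) q + sm f (br p q)"
  and DH_vanishes: "DH_zero br H"
  using algebroid[unfolded H_twisted_Lie_algebroid_def] by blast+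

lemma module_add_left: "sm (f + g) e = sm f e + sm g e"
  and module_add_right: "sm f (e + e') = sm f e + sm f e'"
  and module_of_real: "sm (of_real c) e = c *\<^sub>R e"
  using module_structure[unfolded fmodule_def] by blast+

lemma anchor_derivation: "is_derivation (\<rho> e)"
  and anchor_add: "\<rho> (e + e') g = \<rho> e g + \<rho> e' g"
  and anchor_module: "\<rho> (sm f e) g = f * \<rho> e g"
  using anchor_structure[unfolded anchor_map_def] by blast+

lemma H_skew_left: "H a b c = - H b a c"
  and H_skew_right: "H a b c = - H a c b"
  and H_add: "H a b (c + d) = H a b c + H a b d"
  and H_module: "H a b (sm f c) = sm f (H a b c)"
  using H_tensor[unfolded tensor3_alt_def] by blast+

lemma module_zero_left: "sm 0 e = 0"
  using module_add_left[of 0 0 e] by simp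

lemma anchor_apply_zero: "\<rho> e 0 = 0"
  using anchor_derivation[of e] unfolding is_derivation_def by (metis add.right_neutral add_left_cancel)

lemma anchor_zero: "\<rho> 0 = (\<lambda>_. 0)"
  using anchor_add[of 0 0] by (simp add: fun_eq_iff)

lemma bracket_add_left: "br (a + b) c = br a c + br b c"
  by (metis bracket_skew bracket_add_right minus_add_distrib)

lemma bracket_scaleR_left: "br (r *\<^sub>R a) b = r *\<^sub>R br a b"
  by (metis bracket_skew bracket_scaleR_right scaleR_minus_right)

lemma H_scaleR: "H a b (r *\<^sub>R c) = r *\<^sub>R H a b c"
  by (metis H_module module_of_real)

lemma Jacobiator_eq_H: "br x (br y z) + br y (br z x) + br z (br x y) = H x y z"
  using twisted_Jacobi[of x y z] bracket_skew[of "br x y" z] bracket_skew[of x z]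
  by (simp add: bracket_scaleR_right[of y "-1", simplified])

lemma bracket_commutator_defect: "br x (br y z) - br y (br x z) - br (br x y) z = H x y z"
  using twisted_Jacobi[of x y z] by (simp add: algebra_simps)

lemma bracket_add_swap: "br a b + br b a = 0"
  by (subst bracket_skew) simp

lemma anchor_bracket_commutator:
  "sm (\<rho> p (\<rho> q f)) r = sm (\<rho> (br p q) f) r + sm (\<rho> q (\<rho> p f)) r"
proof -
  have "br p (br q (sm f r))
      = sm (\<rho> p (\<rho> q f)) r + sm (\<rho> q f) (br p r) + (sm (\<rho> p f) (br q r) + sm f (br p (br q r)))"
    by (simp add: bracket_Leibniz bracket_add_right)
  moreover have "br (br p q) (sm f r) + br q (br p (sm f r)) + H p q (sm f r)
      = sm (\<rho> (br p q) f) r + sm f (br (br p q) r)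
        + (sm (\<rho> q (\<rho> p f)) r + sm (\<rho> q f) (br p r) + (sm (\<rho> p f) (br q r) + sm f (br q (br p r))))
        + sm f (H p q r)"
    by (simp add: bracket_Leibniz bracket_add_right H_module)
  moreover note twisted_Jacobi[of p q "sm f r"]
  ultimately have "sm (\<rho> p (\<rho> q f)) r + sm f (br p (br q r))
      = sm (\<rho> (br p q) f) r + sm (\<rho> q (\<rho> p f)) r
        + (sm f (br (br p q) r) + sm f (br q (br p r)) + sm f (H p q r))"
    by (simp add: algebra_simps)
  moreover have "sm f (br p (br q r)) = sm f (br (br p q) r) + sm f (br q (br p r)) + sm f (H p q r)"
    by (simp add: twisted_Jacobi[of p q r] module_add_right)
  ultimately show ?thesis
    by simp
qed

lemma anchor_kernel_bracket_closed:
  assumes nondeg: "\<And>e. (\<forall>g \<psi>. sm (\<rho> e g) \<psi> = 0) \<Longrightarrow> \<rho> e = (\<lambda>_. 0)"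
    and kernel: "\<rho> q = (\<lambda>_. 0)"
  shows "\<rho> (br p q) = (\<lambda>_. 0)"
proof (rule nondeg, intro allI)
  fix f r
  show "sm (\<rho> (br p q) f) r = 0"
    using anchor_bracket_commutator[of p q f r]
    by (simp add: kernel anchor_apply_zero module_zero_left)
qed

lemma anchor_kernel_subspace: "real_subspace {\<psi>. \<rho> \<psi> = (\<lambda>_. 0)}"
  unfolding real_subspace_def
  by (auto simp: anchor_zero anchor_add fun_eq_iff anchor_module module_of_real[symmetric]
      simp del: module_of_real)

end

theorem proposition3p6:
  fixes sm :: "'f::{comm_ring_1,real_algebra_1} \<Rightarrow> 'e::real_vector \<Rightarrow> 'e"
    and \<rho> :: "'e \<Rightarrow> 'f \<Rightarrow> 'f"
    and br :: "'e \<Rightarrow> 'e \<Rightarrow> 'e"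
    and H :: "'e \<Rightarrow> 'e \<Rightarrow> 'e \<Rightarrow> 'e"
  assumes "H_twisted_Lie_algebroid sm \<rho> br H"
    and vector_bundle_nondeg: "\<And>e. (\<forall>g \<psi>. sm (\<rho> e g) \<psi> = 0) \<Longrightarrow> \<rho> e = (\<lambda>_. 0)"
  shows "two_term_Linfty {\<psi>. \<rho> \<psi> = (\<lambda>_. 0)} UNIV id br (\<lambda>\<phi> \<psi>. br \<phi> \<psi>) H"
proof -
  interpret twisted_Lie_algebroid sm \<rho> br H by unfold_locales (fact assms(1))
  show ?thesis
    using anchor_kernel_subspace unfolding two_term_Linfty_def
    by (intro conjI; (simp add: real_subspace_def lin_on_def
          anchor_kernel_bracket_closed[OF vector_bundle_nondeg] anchor_H Jacobiator_eq_H
          bracket_commutator_defect bracket_add_swap DH_vanishes[unfolded DH_zero_def]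
          bracket_add_right bracket_add_left bracket_scaleR_right bracket_scaleR_left
          H_add H_scaleR)?)
       (meson bracket_skew H_skew_left H_skew_right)+
qed

end
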